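(* Let $a_1,\dots,a_t$ be positive integers with $\sum_{i=1}^t a_i=2b$ for an integer $b$. Consider the two-machine instance with three chains of jobs $j^0_1\prec\dots\prec j^0_t$, $j^1_1\prec\dots\prec j^1_{t+1}$, $j^2_1\prec\dots\prec j^2_{t+1}$ (no precedence constraints between different chains), where $j^0_i$ has processing time $a_i$ and every $j^1_i$ and $j^2_i$ has processing time $2b$. Then there is a subset $S\subseteq\{1,\dots,t\}$ with $\sum_{i\in S}a_i=\sum_{i\notin S}a_i$ if and only if this instance has a feasible non-preemptive schedule on two identical machines with makespan at most $(2t+3)b$.
   Context: A schedule assigns each job $j$ a start time $s_j\in\mathbb N$; it is feasible if $s_i+p_i\le s_j$ whenever $i\prec j$ and at every time $t$ at most two jobs $j$ satisfy $t\in[s_j,s_j+p_j)$. The makespan is $\max_j(s_j+p_j)$. *)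

theory Defs
  imports Main
begin

definition feasible2 :: "'j set \<Rightarrow> ('j \<Rightarrow> 'j \<Rightarrow> bool) \<Rightarrow> ('j \<Rightarrow> nat) \<Rightarrow> ('j \<Rightarrow> nat) \<Rightarrow> bool" where
  "feasible2 J prec p s \<longleftrightarrow>
     (\<forall>i\<in>J. \<forall>j\<in>J. prec i j \<longrightarrow> s i + p i \<le> s j) \<and>
     (\<forall>\<tau>::nat. card {j\<in>J. s j \<le> \<tau> \<and> \<tau> < s j + p j} \<le> 2)"

definition makespan :: "'j set \<Rightarrow> ('j \<Rightarrow> nat) \<Rightarrow> ('j \<Rightarrow> nat) \<Rightarrow> nat" where
  "makespan J p s = Max ((\<lambda>j. s j + p j) ` J)"

text \<open>The instance: job (c,i) is the i-th job of chain c.\<close>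

definition inst_jobs :: "nat \<Rightarrow> (nat \<times> nat) set" where
  "inst_jobs t = {(0, i) | i. 1 \<le> i \<and> i \<le> t} \<union>
                 {(c, i) | c i. (c = 1 \<or> c = 2) \<and> 1 \<le> i \<and> i \<le> t + 1}"

definition inst_prec :: "nat \<times> nat \<Rightarrow> nat \<times> nat \<Rightarrow> bool" where
  "inst_prec x y \<longleftrightarrow> fst x = fst y \<and> snd x < snd y"

definition inst_p :: "(nat \<Rightarrow> nat) \<Rightarrow> nat \<Rightarrow> nat \<times> nat \<Rightarrow> nat" where
  "inst_p a b x = (if fst x = 0 then a (snd x) else 2 * b)"

end

theory Submission
  imports Defs
begin

text \<open>
  Given an even split S, run chains 1 and 2 back to back, chain 1 leaving a hole of length a i
  after its i-th job when i \<in> S and chain 2 when i \<notin> S; job i of chain 0 fills that hole.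
  Conversely, under makespan T = (2t+3)b the chains 1 and 2 each keep their machine busy for
  (t+1) * 2b units, so each has at most b idle instants below T, and an idle instant is congruent
  mod 2b to the number of idle instants before it. Chain 0 only runs while chain 1 or chain 2 is
  idle, so reducing the runs of its jobs mod 2b gives intervals inside [0, b) of total length 2b
  covering each point at most twice, and such a family splits into two halves of length b.
\<close>

definition interval_depth :: "'a set \<Rightarrow> ('a \<Rightarrow> nat) \<Rightarrow> ('a \<Rightarrow> nat) \<Rightarrow> nat \<Rightarrow> nat" where
  "interval_depth X l r q = card {x\<in>X. l x \<le> q \<and> q < r x}"

lemma sum_interval_depth:
  assumes "finite X" "\<forall>x\<in>X. r x \<le> n"
  shows "(\<Sum>q<n. interval_depth X l r q) = (\<Sum>x\<in>X. r x - l x)"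
proof -
  have "(\<Sum>q<n. interval_depth X l r q) = (\<Sum>q<n. \<Sum>x\<in>X. if l x \<le> q \<and> q < r x then 1 else 0)"
    unfolding interval_depth_def using assms(1) by (simp add: sum.If_cases Int_def)
  also have "\<dots> = (\<Sum>x\<in>X. \<Sum>q<n. if l x \<le> q \<and> q < r x then 1 else 0)"
    by (rule sum.swap)
  also have "\<dots> = (\<Sum>x\<in>X. r x - l x)"
  proof (rule sum.cong[OF refl])
    fix x assume "x \<in> X"
    then have "{..<n} \<inter> {q. l x \<le> q \<and> q < r x} = {l x..<r x}" using assms(2) by auto
    then show "(\<Sum>q<n. if l x \<le> q \<and> q < r x then 1 else 0) = r x - l x"
      by (simp add: sum.If_cases)
  qed
  finally show ?thesis .
qed

lemma interval_depth_mono: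
  assumes "finite Y" "X \<subseteq> Y" "\<forall>x\<in>X. r' x \<le> r x"
  shows "interval_depth X l r' q \<le> interval_depth Y l r q"
  unfolding interval_depth_def by (rule card_mono) (use assms in fastforce)+

lemma depth_two_top_intervals:
  assumes fin: "finite X" and X: "\<forall>x\<in>X. l x < r x \<and> r x \<le> n"
    and depth: "\<forall>q<n. interval_depth X l r q \<le> 2"
    and total: "(\<Sum>x\<in>X. r x - l x) = 2 * n" and "n > 0"
  obtains J K where "J \<in> X" "K \<in> X" "J \<noteq> K" "r J = n" "r K = n" "l K \<le> l J"
    "\<forall>z\<in>X - {J, K}. r z \<le> l J"
proof -
  have "(\<Sum>q<n-1. interval_depth X l r q) + interval_depth X l r (n-1) = 2 * n"
    using sum_interval_depth[OF fin, of r n l] X total \<open>n > 0\<close>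
    by (metis Suc_pred' sum.lessThan_Suc)
  moreover have "(\<Sum>q<n-1. interval_depth X l r q) \<le> (\<Sum>q<n-1. 2)"
    by (rule sum_mono) (use depth in auto)
  ultimately have "card {x\<in>X. l x \<le> n-1 \<and> n-1 < r x} = 2"
    using depth \<open>n > 0\<close> unfolding interval_depth_def by (simp add: le_antisym)
  then obtain x y where xy: "{x\<in>X. l x \<le> n-1 \<and> n-1 < r x} = {x, y}" "x \<noteq> y"
    by (auto simp: card_2_iff)
  have mem: "x \<in> X" "y \<in> X" "l x \<le> n-1" "l y \<le> n-1" "n-1 < r x" "n-1 < r y"
    using xy(1) by (auto simp: set_eq_iff)
  then have "r x = n" "r y = n" using X by fastforce+
  then obtain J K where JK: "J \<in> X" "K \<in> X" "J \<noteq> K" "r J = n" "r K = n" "l K \<le> l J"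
    "l J < n" using mem xy(2) \<open>n > 0\<close>
    by (cases "l y \<le> l x") (metis Suc_pred' less_Suc_eq_le nat_le_linear)+
  have "r z \<le> l J" if z: "z \<in> X" "z \<noteq> J" "z \<noteq> K" for z
  proof (rule ccontr)
    assume "\<not> r z \<le> l J"
    then have "{z, J, K} \<subseteq> {x\<in>X. l x \<le> r z - 1 \<and> r z - 1 < r x}"
      using X z JK by fastforce
    then have "card {z, J, K} \<le> interval_depth X l r (r z - 1)"
      unfolding interval_depth_def by (rule card_mono[rotated]) (simp add: fin)
    also have "\<dots> \<le> 2" using depth X z by fastforce
    finally show False using z JK(3) by simp
  qed
  then show thesis using that JK by blast
qed

lemma sum_lengths_fun_upd:
  assumes "finite A"
  shows "(\<Sum>x\<in>A. (r(k := v)) x - l x) = (\<Sum>x\<in>A - {k}. r x - l x) + (if k \<in> A then v - l k else 0)"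
proof (cases "k \<in> A")
  case True
  then show ?thesis using assms by (simp add: sum.remove[of A k] add.commute)
next
  case False
  then show ?thesis by (auto intro: sum.cong)
qed

lemma depth_two_family_truncate:
  assumes fin: "finite X" and X: "\<forall>x\<in>X. l x < r x \<and> r x \<le> n"
    and depth: "\<forall>q<n. interval_depth X l r q \<le> 2" and total: "(\<Sum>x\<in>X. r x - l x) = 2 * n"
    and JK: "J \<in> X" "K \<in> X" "J \<noteq> K" "r J = n" "r K = n" "l K \<le> l J"
    and others: "\<forall>z\<in>X - {J, K}. r z \<le> l J"
  defines "r' \<equiv> r(K := l J)" and "X' \<equiv> {x\<in>X - {J}. l x < (r(K := l J)) x}"
  shows "finite X'" "\<forall>x\<in>X'. l x < r' x \<and> r' x \<le> l J"
    "\<forall>q<l J. interval_depth X' l r' q \<le> 2" "(\<Sum>x\<in>X'. r' x - l x) = 2 * l J"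
proof -
  have "l J < n" using X JK by auto
  have XJK: "X - {J} - {K} = X - {J, K}" by auto
  show "finite X'" using fin by (simp add: X'_def)
  show "\<forall>x\<in>X'. l x < r' x \<and> r' x \<le> l J" using others by (auto simp: X'_def r'_def)
  show "\<forall>q<l J. interval_depth X' l r' q \<le> 2"
  proof (intro allI impI)
    fix q assume "q < l J"
    have "interval_depth X' l r' q \<le> interval_depth X l r q"
      by (rule interval_depth_mono[OF fin]) (use JK \<open>l J < n\<close> in \<open>auto simp: X'_def r'_def\<close>)
    also have "\<dots> \<le> 2" using depth \<open>q < l J\<close> \<open>l J < n\<close> by simp
    finally show "interval_depth X' l r' q \<le> 2" .
  qed
  have "(\<Sum>x\<in>X. r x - l x) = (\<Sum>x\<in>X - {J, K}. r x - l x) + (n - l J) + (n - l K)"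
    using sum.remove[OF fin JK(1), of "\<lambda>x. r x - l x"]
      sum.remove[of "X - {J}" K "\<lambda>x. r x - l x"] fin JK XJK by simp
  moreover have "(\<Sum>x\<in>X'. r' x - l x) = (\<Sum>x\<in>X - {J}. r' x - l x)"
    by (rule sum.mono_neutral_left) (use fin X in \<open>auto simp: X'_def r'_def\<close>)
  moreover have "\<dots> = (\<Sum>x\<in>X - {J, K}. r x - l x) + (l J - l K)"
    using sum_lengths_fun_upd[of "X - {J}" r K "l J" l] fin JK XJK by (simp add: r'_def)
  ultimately show "(\<Sum>x\<in>X'. r' x - l x) = 2 * l J"
    using total JK \<open>l J < n\<close> by simp
qed

lemma depth_two_interval_family_halves:
  assumes "finite X" "\<forall>x\<in>X. l x < r x \<and> r x \<le> n"
    "\<forall>q<n. interval_depth X l r q \<le> 2" "(\<Sum>x\<in>X. r x - l x) = 2 * n"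
  shows "\<exists>G\<subseteq>X. (\<Sum>x\<in>G. r x - l x) = n"
  using assms
proof (induction n arbitrary: X r rule: less_induct)
  case (less n X r)
  show ?case
  proof (cases "n = 0")
    case True
    then show ?thesis by (intro exI[of _ "{}"]) auto
  next
    case False
    then have "n > 0" by simp
    then obtain J K where JK: "J \<in> X" "K \<in> X" "J \<noteq> K" "r J = n" "r K = n" "l K \<le> l J"
      and others: "\<forall>z\<in>X - {J, K}. r z \<le> l J"
      by (rule depth_two_top_intervals[OF less.prems])
    define r' where "r' = r(K := l J)"
    define X' where "X' = {x\<in>X - {J}. l x < r' x}"
    have "l J < n" using less.prems(2) JK by auto
    then have "\<exists>G\<subseteq>X'. (\<Sum>x\<in>G. r' x - l x) = l J"
      by (rule less.IH[OF _ depth_two_family_truncate[OF less.prems JK others, folded r'_def, folded X'_def]])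
    then obtain G where G: "G \<subseteq> X'" "(\<Sum>x\<in>G. r' x - l x) = l J" by blast
    have "finite G" using G(1) less.prems(1) by (auto simp: X'_def intro: finite_subset)
    have "J \<notin> G" using G(1) by (auto simp: X'_def)
    \<comment> \<open>restoring K to full length, or else adding J, turns G into a half of X\<close>
    have G_sum: "(\<Sum>x\<in>G - {K}. r x - l x) + (if K \<in> G then l J - l K else 0) = l J"
      using trans[OF sym[OF sum_lengths_fun_upd[OF \<open>finite G\<close>]] G(2)[unfolded r'_def]] .
    show ?thesis
    proof (cases "K \<in> G")
      case True
      then have "(\<Sum>x\<in>G. r x - l x) = n"
        using sum.remove[OF \<open>finite G\<close> True, of "\<lambda>x. r x - l x"] G_sum JK \<open>l J < n\<close> by simp
      then show ?thesis using G(1) by (auto simp: X'_def)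
    next
      case False
      then have "(\<Sum>x\<in>insert J G. r x - l x) = n"
        using G_sum \<open>finite G\<close> \<open>J \<notin> G\<close> JK \<open>l J < n\<close> by simp
      then show ?thesis using G(1) JK by (intro exI[of _ "insert J G"]) (auto simp: X'_def)
    qed
  qed
qed

lemma card_gaps_below_plus_blocks:
  fixes f :: "'k \<Rightarrow> nat"
  assumes fin: "finite K"
    and disj: "\<forall>k\<in>K. \<forall>k'\<in>K. k \<noteq> k' \<longrightarrow> f k + L \<le> f k' \<or> f k' + L \<le> f k"
    and gap: "\<tau> \<notin> (\<Union>k\<in>K. {f k..<f k + L})"
  shows "card ({..<\<tau>} - (\<Union>k\<in>K. {f k..<f k + L})) + L * card {k\<in>K. f k + L \<le> \<tau>} = \<tau>"
proof -
  let ?B = "\<Union>k\<in>K. {f k..<f k + L}"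
  have "{..<\<tau>} \<inter> ?B = (\<Union>k\<in>{k\<in>K. f k + L \<le> \<tau>}. {f k..<f k + L})"
    using gap by fastforce
  also have "card \<dots> = (\<Sum>k\<in>{k\<in>K. f k + L \<le> \<tau>}. card {f k..<f k + L})"
    by (rule card_UN_disjoint) (use fin disj in fastforce)+
  finally have "card ({..<\<tau>} \<inter> ?B) = L * card {k\<in>K. f k + L \<le> \<tau>}" by simp
  moreover have "card ({..<\<tau>} - ?B) + card ({..<\<tau>} \<inter> ?B) = \<tau>"
    using card_Diff_subset_Int[of "{..<\<tau>}" ?B] card_mono[of "{..<\<tau>}" "{..<\<tau>} \<inter> ?B"]
    by (simp add: Diff_Int_distrib2 card_Diff_subset Int_lower1)
  ultimately show ?thesis by simp
qed

lemma gaps_between_blocks_inj_mod: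
  fixes f :: "'k \<Rightarrow> nat"
  assumes fin: "finite K"
    and disj: "\<forall>k\<in>K. \<forall>k'\<in>K. k \<noteq> k' \<longrightarrow> f k + L \<le> f k' \<or> f k' + L \<le> f k"
    and fit: "\<forall>k\<in>K. f k + L \<le> card K * L + g" and "g \<le> L"
  defines "Gaps \<equiv> {\<tau>. \<tau> < card K * L + g \<and> \<tau> \<notin> (\<Union>k\<in>K. {f k..<f k + L})}"
  shows "inj_on (\<lambda>\<tau>. \<tau> mod L) Gaps" and "\<forall>\<tau>\<in>Gaps. \<tau> mod L < g"
proof -
  let ?B = "\<Union>k\<in>K. {f k..<f k + L}"
  define idle where "idle \<tau> = card ({..<\<tau>} - ?B)" for \<tau>
  have idle_strict: "idle \<tau> < idle \<tau>'" if "\<tau> < \<tau>'" "\<tau> \<notin> ?B" for \<tau> \<tau>'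
  proof -
    have "\<tau> \<in> ({..<\<tau>'} - ?B) - ({..<\<tau>} - ?B)" using that by simp
    moreover have "{..<\<tau>} - ?B \<subseteq> {..<\<tau>'} - ?B" using that by auto
    ultimately have "{..<\<tau>} - ?B \<subset> {..<\<tau>'} - ?B" by blast
    then show ?thesis unfolding idle_def by (simp add: psubset_card_mono)
  qed
  have "idle (card K * L + g) = g"
  proof -
    have "{k\<in>K. f k + L \<le> card K * L + g} = K" using fit by auto
    then show ?thesis
      using card_gaps_below_plus_blocks[OF fin disj, of "card K * L + g"] fit
      unfolding idle_def by fastforce
  qed
  then have idle_less: "idle \<tau> < g" if "\<tau> \<in> Gaps" for \<tau>
    using idle_strict[of \<tau> "card K * L + g"] that by (simp add: Gaps_def)
  have mod_idle: "\<tau> mod L = idle \<tau>" if "\<tau> \<in> Gaps" for \<tau>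
  proof -
    have "\<tau> = idle \<tau> + L * card {k\<in>K. f k + L \<le> \<tau>}"
      using card_gaps_below_plus_blocks[OF fin disj] that by (simp add: idle_def Gaps_def)
    then have "\<tau> mod L = idle \<tau> mod L" by (metis mod_mult_self2)
    then show ?thesis using idle_less[OF that] \<open>g \<le> L\<close> by simp
  qed
  show "\<forall>\<tau>\<in>Gaps. \<tau> mod L < g" using mod_idle idle_less by simp
  show "inj_on (\<lambda>\<tau>. \<tau> mod L) Gaps"
  proof (rule inj_onI)
    fix \<tau> \<tau>' assume "\<tau> \<in> Gaps" "\<tau>' \<in> Gaps" "\<tau> mod L = \<tau>' mod L"
    then have "idle \<tau> = idle \<tau>'" using mod_idle by simp
    then show "\<tau> = \<tau>'"
      using idle_strict \<open>\<tau> \<in> Gaps\<close> \<open>\<tau>' \<in> Gaps\<close> unfolding Gaps_def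
      by (metis (no_types, lifting) less_irrefl mem_Collect_eq nat_neq_iff)
  qed
qed

definition running :: "'j set \<Rightarrow> ('j \<Rightarrow> nat) \<Rightarrow> ('j \<Rightarrow> nat) \<Rightarrow> nat \<Rightarrow> 'j set" where
  "running J p s \<tau> = {j\<in>J. s j \<le> \<tau> \<and> \<tau> < s j + p j}"

lemma feasible2_iff_running:
  "feasible2 J prec p s \<longleftrightarrow>
     (\<forall>i\<in>J. \<forall>j\<in>J. prec i j \<longrightarrow> s i + p i \<le> s j) \<and> (\<forall>\<tau>. card (running J p s \<tau>) \<le> 2)"
  by (simp add: feasible2_def running_def)

lemma makespan_le_iff:
  assumes "finite J" "J \<noteq> {}"
  shows "makespan J p s \<le> T \<longleftrightarrow> (\<forall>j\<in>J. s j + p j \<le> T)"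
  using assms by (simp add: makespan_def)

lemma mem_inst_jobs:
  "(c, i) \<in> inst_jobs t \<longleftrightarrow> (c = 0 \<and> 1 \<le> i \<and> i \<le> t) \<or> ((c = 1 \<or> c = 2) \<and> 1 \<le> i \<and> i \<le> t + 1)"
  by (auto simp: inst_jobs_def)

lemma finite_inst_jobs: "finite (inst_jobs t)"
proof -
  have "inst_jobs t \<subseteq> {0..2} \<times> {0..t+1}" by (auto simp: inst_jobs_def)
  then show ?thesis by (rule finite_subset) simp
qed

lemma inst_jobs_nonempty: "inst_jobs t \<noteq> {}"
  using mem_inst_jobs[of 1 1 t] by auto

lemma inj_on_fst_running:
  assumes "\<forall>i\<in>J. \<forall>j\<in>J. inst_prec i j \<longrightarrow> s i + p i \<le> s j"
  shows "inj_on fst (running J p s \<tau>)"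
proof (rule inj_onI)
  fix x y assume x: "x \<in> running J p s \<tau>" and y: "y \<in> running J p s \<tau>" and "fst x = fst y"
  have "\<not> snd x < snd y" "\<not> snd y < snd x"
    using assms x y \<open>fst x = fst y\<close> unfolding running_def inst_prec_def by fastforce+
  then show "x = y" using \<open>fst x = fst y\<close> by (simp add: prod_eq_iff)
qed

definition prefix_sum :: "nat set \<Rightarrow> (nat \<Rightarrow> nat) \<Rightarrow> nat \<Rightarrow> nat" where
  "prefix_sum S a k = (\<Sum>j\<in>S \<inter> {1..<k}. a j)"

lemma mono_prefix_sum: "mono (prefix_sum S a)"
  unfolding prefix_sum_def by (intro monoI sum_mono2) auto

lemma prefix_sum_le_sum: "finite S \<Longrightarrow> prefix_sum S a k \<le> sum a S"
  unfolding prefix_sum_def by (rule sum_mono2) auto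

lemma prefix_sum_Suc: "1 \<le> i \<Longrightarrow> i \<in> S \<Longrightarrow> prefix_sum S a (Suc i) = prefix_sum S a i + a i"
proof -
  assume "1 \<le> i" "i \<in> S"
  then have "S \<inter> {1..<Suc i} = insert i (S \<inter> {1..<i})" by auto
  then show ?thesis by (simp add: prefix_sum_def)
qed

lemma chain_block_misses_slot:
  fixes P :: "nat \<Rightarrow> nat"
  assumes "mono P" "1 \<le> k"
    and "L * (k - 1) + P k \<le> \<tau>" "\<tau> < L * k + P k"
    and "L * i + P i \<le> \<tau>" "\<tau> < L * i + P (Suc i)"
  shows False
proof (cases "k \<le> i")
  case True
  then have "L * k + P k \<le> L * i + P i" using \<open>mono P\<close> by (simp add: add_mono monoD)
  then show False using assms by linarith
next
  case False
  then have "i \<le> k - 1" "Suc i \<le> k" by linarith+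
  then have "L * i \<le> L * (k - 1)" "P (Suc i) \<le> P k" using \<open>mono P\<close> by (simp_all add: monoD)
  then have "L * i + P (Suc i) \<le> L * (k - 1) + P k" by (rule add_mono)
  then show False using assms by linarith
qed

locale even_split =
  fixes S :: "nat set" and t b :: nat and a :: "nat \<Rightarrow> nat"
  assumes S_subset: "S \<subseteq> {1..t}" and sum_S: "sum a S = b" and sum_compl: "sum a ({1..t} - S) = b"
begin

definition side :: "nat \<Rightarrow> nat" where
  "side i = (if i \<in> S then 1 else 2)"

definition delay :: "nat \<Rightarrow> nat \<Rightarrow> nat" where
  "delay c = prefix_sum (if c = 1 then S else {1..t} - S) a"

definition sched :: "nat \<times> nat \<Rightarrow> nat" where
  "sched x = (if fst x = 0 then 2 * b * snd x + delay (side (snd x)) (snd x)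
              else 2 * b * (snd x - 1) + delay (fst x) (snd x))"

lemma mono_delay: "mono (delay c)"
  by (simp add: delay_def mono_prefix_sum)

lemma delay_le: "delay c k \<le> b"
proof -
  have "finite S" using S_subset finite_subset by blast
  then show ?thesis
    using prefix_sum_le_sum[of S a k] prefix_sum_le_sum[of "{1..t} - S" a k] sum_S sum_compl
    by (simp add: delay_def)
qed

lemma delay_side_Suc: "i \<in> {1..t} \<Longrightarrow> delay (side i) (Suc i) = delay (side i) i + a i"
  by (simp add: delay_def side_def prefix_sum_Suc)

lemma sched_end_chain0: "i \<in> {1..t} \<Longrightarrow> sched (0, i) + inst_p a b (0, i) = 2 * b * i + delay (side i) (Suc i)"
  by (simp add: sched_def inst_p_def delay_side_Suc)

lemma sched_end_chain: "c \<noteq> 0 \<Longrightarrow> 1 \<le> k \<Longrightarrow> sched (c, k) + inst_p a b (c, k) = 2 * b * k + delay c k"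
  by (simp add: sched_def inst_p_def algebra_simps mult_eq_if)

lemma sched_respects_prec:
  "\<forall>x\<in>inst_jobs t. \<forall>y\<in>inst_jobs t. inst_prec x y \<longrightarrow> sched x + inst_p a b x \<le> sched y"
proof (intro ballI impI)
  fix x y assume "x \<in> inst_jobs t" "y \<in> inst_jobs t" "inst_prec x y"
  then obtain c i j where xy: "x = (c, i)" "y = (c, j)" "i < j" "1 \<le> i" "c = 0 \<longrightarrow> i \<le> t"
    by (cases x, cases y) (auto simp: inst_prec_def mem_inst_jobs)
  show "sched x + inst_p a b x \<le> sched y"
  proof (cases "c = 0")
    case True
    have "sched x + inst_p a b x \<le> 2 * b * i + 2 * b"
      using sched_end_chain0[of i] delay_le[of "side i" "Suc i"] xy True by simp
    also have "\<dots> \<le> 2 * b * j" using mult_le_mono2[of "Suc i" j "2 * b"] xy(3) by simp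
    finally show ?thesis using True xy by (simp add: sched_def)
  next
    case False
    have "2 * b * i \<le> 2 * b * (j - 1)" by (rule mult_le_mono2) (use xy in linarith)
    moreover have "delay c i \<le> delay c j" using monoD[OF mono_delay] xy(3) by simp
    moreover have "sched x + inst_p a b x = 2 * b * i + delay c i"
      using sched_end_chain[OF False xy(4)] xy(1) by simp
    moreover have "sched y = 2 * b * (j - 1) + delay c j" using False xy(2) by (simp add: sched_def)
    ultimately show ?thesis by (metis add_mono)
  qed
qed

lemma card_running_sched_le_2: "card (running (inst_jobs t) (inst_p a b) sched \<tau>) \<le> 2"
proof (rule ccontr)
  let ?R = "running (inst_jobs t) (inst_p a b) sched \<tau>"
  assume "\<not> card ?R \<le> 2"
  moreover have "card (fst ` ?R) = card ?R"
    by (rule card_image[OF inj_on_fst_running[OF sched_respects_prec]])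
  moreover have "fst ` ?R \<subseteq> {0, 1, 2}" by (auto simp: running_def inst_jobs_def)
  moreover from this have "card (fst ` ?R) \<le> card {0, 1, 2 :: nat}" by (rule card_mono[rotated]) simp
  ultimately have "fst ` ?R = {0, 1, 2}" by (intro card_subset_eq) simp_all
  then have "0 \<in> fst ` ?R" "side j \<in> fst ` ?R" for j by (auto simp: side_def)
  then obtain i k where i: "(0, i) \<in> ?R" "(side i, k) \<in> ?R" by force
  have "i \<in> {1..t}" "1 \<le> k" "side i \<noteq> 0"
    using i by (auto simp: running_def mem_inst_jobs side_def split: if_splits)
  have "2 * b * (k - 1) + delay (side i) k \<le> \<tau>" "\<tau> < 2 * b * k + delay (side i) k"
    using i(2) sched_end_chain[OF \<open>side i \<noteq> 0\<close> \<open>1 \<le> k\<close>] \<open>side i \<noteq> 0\<close>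
    by (simp_all add: running_def sched_def)
  moreover have "2 * b * i + delay (side i) i \<le> \<tau>" "\<tau> < 2 * b * i + delay (side i) (Suc i)"
    using i(1) sched_end_chain0[OF \<open>i \<in> {1..t}\<close>] by (simp_all add: running_def sched_def)
  ultimately show False by (rule chain_block_misses_slot[OF mono_delay \<open>1 \<le> k\<close>])
qed

lemma makespan_sched_le: "makespan (inst_jobs t) (inst_p a b) sched \<le> (2 * t + 3) * b"
proof -
  have "sched x + inst_p a b x \<le> (2 * t + 3) * b" if x_job: "x \<in> inst_jobs t" for x
  proof -
    obtain c i where x: "x = (c, i)" by fastforce
    consider "c = 0" "i \<in> {1..t}" | "c \<noteq> 0" "1 \<le> i" "i \<le> t + 1"
      using x_job x by (auto simp: mem_inst_jobs)
    then show ?thesis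
    proof cases
      case 1
      have "2 * b * i \<le> 2 * b * t" using 1 by simp
      moreover have "(2 * t + 3) * b = 2 * b * t + 3 * b" by (simp add: algebra_simps)
      ultimately show ?thesis
        using sched_end_chain0[OF \<open>i \<in> {1..t}\<close>] delay_le[of "side i" "Suc i"] unfolding x \<open>c = 0\<close>
        by linarith
    next
      case 2
      have "2 * b * i \<le> 2 * b * (t + 1)" using 2 by (intro mult_le_mono2)
      moreover have "(2 * t + 3) * b = 2 * b * (t + 1) + b" by (simp add: algebra_simps)
      ultimately show ?thesis using sched_end_chain[OF 2(1,2)] delay_le[of c i] unfolding x by linarith
    qed
  qed
  then show ?thesis by (simp add: makespan_le_iff finite_inst_jobs inst_jobs_nonempty)
qed

end

lemma schedule_from_partition:
  assumes "S \<subseteq> {1..t}" "sum a S = b" "sum a {1..t} = 2 * b"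
  shows "\<exists>s. feasible2 (inst_jobs t) inst_prec (inst_p a b) s \<and>
              makespan (inst_jobs t) (inst_p a b) s \<le> (2 * t + 3) * b"
proof -
  have "sum a ({1..t} - S) = b" using assms sum.subset_diff[of S "{1..t}" a] by simp
  then interpret even_split S t b a by unfold_locales (use assms in auto)
  show ?thesis
    using sched_respects_prec card_running_sched_le_2 makespan_sched_le
    by (auto simp: feasible2_iff_running)
qed

lemma mod_add_to_residue:
  fixes x q m :: nat
  assumes "x mod m \<le> q" "q < m"
  shows "(x + (q - x mod m)) mod m = q"
proof -
  have "(x + (q - x mod m)) mod m = (x mod m + (q - x mod m)) mod m" by (simp add: mod_add_left_eq)
  also have "\<dots> = q" using assms by simp
  finally show ?thesis .
qed

lemma residue_window:
  fixes x a g m :: nat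
  assumes "g < m" "0 < a" and window: "\<forall>\<tau>. x \<le> \<tau> \<longrightarrow> \<tau> < x + a \<longrightarrow> \<tau> mod m < g"
  shows "x mod m + a \<le> g"
proof (rule ccontr)
  assume "\<not> x mod m + a \<le> g"
  moreover have "x mod m < g" using window \<open>0 < a\<close> by simp
  ultimately have "(x + (g - x mod m)) mod m < g" using window by simp
  then show False using mod_add_to_residue[of x m g] \<open>x mod m < g\<close> \<open>g < m\<close> by simp
qed

lemma card_fiber_le_1:
  assumes "inj_on f A"
  shows "card {x\<in>A. f x = y} \<le> 1"
proof (cases "finite {x\<in>A. f x = y}")
  case True
  then show ?thesis using assms by (auto simp: card_le_Suc0_iff_eq inj_on_def)
qed simp

locale short_schedule =
  fixes a :: "nat \<Rightarrow> nat" and t b :: nat and s :: "nat \<times> nat \<Rightarrow> nat"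
  assumes feasible: "feasible2 (inst_jobs t) inst_prec (inst_p a b) s"
    and makespan: "makespan (inst_jobs t) (inst_p a b) s \<le> (2 * t + 3) * b"
begin

definition gaps :: "nat \<Rightarrow> nat set" where
  "gaps c = {\<tau>. \<tau> < (2 * t + 3) * b \<and> \<tau> \<notin> (\<Union>k\<in>{1..t+1}. {s (c, k)..<s (c, k) + 2 * b})}"

lemma respects_prec: "\<forall>x\<in>inst_jobs t. \<forall>y\<in>inst_jobs t. inst_prec x y \<longrightarrow> s x + inst_p a b x \<le> s y"
  and card_running_le_2: "card (running (inst_jobs t) (inst_p a b) s \<tau>) \<le> 2"
  using feasible by (simp_all add: feasible2_iff_running)

lemma job_ends_before_makespan: "x \<in> inst_jobs t \<Longrightarrow> s x + inst_p a b x \<le> (2 * t + 3) * b"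
  using makespan by (simp add: makespan_le_iff finite_inst_jobs inst_jobs_nonempty)

lemma finite_gaps: "finite (gaps c)"
  by (rule finite_subset[of _ "{..<(2 * t + 3) * b}"]) (auto simp: gaps_def)

lemma gaps_inj_mod:
  assumes "c = 1 \<or> c = 2"
  shows "inj_on (\<lambda>\<tau>. \<tau> mod (2 * b)) (gaps c)" and "\<forall>\<tau>\<in>gaps c. \<tau> mod (2 * b) < b"
proof -
  have jobs: "(c, k) \<in> inst_jobs t" "inst_p a b (c, k) = 2 * b" if "k \<in> {1..t+1}" for k
    using that assms by (auto simp: mem_inst_jobs inst_p_def)
  have before: "s (c, i) + 2 * b \<le> s (c, j)" if "i \<in> {1..t+1}" "j \<in> {1..t+1}" "i < j" for i j
  proof -
    have "inst_prec (c, i) (c, j)" using that(3) by (simp add: inst_prec_def)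
    then show ?thesis using respects_prec jobs[OF that(1)] jobs[OF that(2)] by metis
  qed
  have disj: "\<forall>k\<in>{1..t+1}. \<forall>k'\<in>{1..t+1}. k \<noteq> k' \<longrightarrow>
      s (c, k) + 2 * b \<le> s (c, k') \<or> s (c, k') + 2 * b \<le> s (c, k)"
    using before by (metis nat_neq_iff)
  have "card {1..t+1} * (2 * b) + b = (2 * t + 3) * b" by (simp add: algebra_simps)
  moreover have "\<forall>k\<in>{1..t+1}. s (c, k) + 2 * b \<le> (2 * t + 3) * b"
    using job_ends_before_makespan jobs by metis
  ultimately show "inj_on (\<lambda>\<tau>. \<tau> mod (2 * b)) (gaps c)" "\<forall>\<tau>\<in>gaps c. \<tau> mod (2 * b) < b"
    using gaps_between_blocks_inj_mod[OF finite_atLeastAtMost disj, of b] unfolding gaps_def by simp_all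
qed

lemma running_chain0_in_gaps:
  assumes run: "(0, i) \<in> running (inst_jobs t) (inst_p a b) s \<tau>"
  shows "\<tau> \<in> gaps 1 \<union> gaps 2"
proof (rule ccontr)
  assume "\<tau> \<notin> gaps 1 \<union> gaps 2"
  moreover have "\<tau> < (2 * t + 3) * b"
    using run job_ends_before_makespan[of "(0, i)"] by (auto simp: running_def)
  ultimately obtain k k' where "k \<in> {1..t+1}" "k' \<in> {1..t+1}"
    "\<tau> \<in> {s (1, k)..<s (1, k) + 2 * b}" "\<tau> \<in> {s (2, k')..<s (2, k') + 2 * b}"
    by (auto simp: gaps_def)
  then have "{(0, i), (1, k), (2, k')} \<subseteq> running (inst_jobs t) (inst_p a b) s \<tau>"
    using run by (auto simp: running_def mem_inst_jobs inst_p_def)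
  then have "card {(0::nat, i), (1::nat, k), (2::nat, k')} \<le> card (running (inst_jobs t) (inst_p a b) s \<tau>)"
    by (rule card_mono[rotated]) (simp add: running_def finite_inst_jobs)
  then show False using card_running_le_2[of \<tau>] by simp
qed

definition offset :: "nat \<Rightarrow> nat" where
  "offset i = s (0, i) mod (2 * b)"

lemma offset_window:
  assumes "i \<in> {1..t}" "0 < a i" "0 < b"
  shows "offset i + a i \<le> b"
  unfolding offset_def
proof (rule residue_window)
  show "b < 2 * b" using \<open>0 < b\<close> by simp
  show "\<forall>\<tau>. s (0, i) \<le> \<tau> \<longrightarrow> \<tau> < s (0, i) + a i \<longrightarrow> \<tau> mod (2 * b) < b"
  proof (intro allI impI)
    fix \<tau> assume "s (0, i) \<le> \<tau>" "\<tau> < s (0, i) + a i"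
    then have "(0, i) \<in> running (inst_jobs t) (inst_p a b) s \<tau>"
      using assms(1) by (simp add: running_def mem_inst_jobs inst_p_def)
    then show "\<tau> mod (2 * b) < b" using running_chain0_in_gaps gaps_inj_mod(2) by blast
  qed
qed fact

lemma interval_depth_offsets:
  assumes "q < b"
  shows "interval_depth {1..t} offset (\<lambda>i. offset i + a i) q \<le> 2"
proof -
  let ?R = "running (inst_jobs t) (inst_p a b) s"
  let ?Q = "{i\<in>{1..t}. offset i \<le> q \<and> q < offset i + a i}"
  let ?fiber = "\<lambda>c. {\<tau>\<in>gaps c. \<tau> mod (2 * b) = q}"
  define \<sigma> where "\<sigma> i = s (0, i) + (q - offset i)" for i
  have \<sigma>_run: "(0, i) \<in> ?R (\<sigma> i)" and \<sigma>_mod: "\<sigma> i mod (2 * b) = q" if "i \<in> ?Q" for i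
    using that mod_add_to_residue[of "s (0, i)" "2 * b" q] \<open>q < b\<close>
    by (auto simp: \<sigma>_def offset_def running_def mem_inst_jobs inst_p_def)
  have "inj_on \<sigma> ?Q"
  proof (rule inj_onI)
    fix i j assume "i \<in> ?Q" "j \<in> ?Q" "\<sigma> i = \<sigma> j"
    have "(0, i) \<in> ?R (\<sigma> i)" "(0, j) \<in> ?R (\<sigma> i)"
      using \<sigma>_run[OF \<open>i \<in> ?Q\<close>] \<sigma>_run[OF \<open>j \<in> ?Q\<close>] \<open>\<sigma> i = \<sigma> j\<close> by simp_all
    then have "(0, i) = (0::nat, j)" by (rule inj_onD[OF inj_on_fst_running[OF respects_prec], rotated]) simp
    then show "i = j" by simp
  qed
  moreover have "\<sigma> ` ?Q \<subseteq> ?fiber 1 \<union> ?fiber 2"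
    using running_chain0_in_gaps \<sigma>_run \<sigma>_mod by blast
  ultimately have "card ?Q \<le> card (?fiber 1 \<union> ?fiber 2)"
    by (simp add: card_image[symmetric] card_mono finite_gaps)
  also have "\<dots> \<le> card (?fiber 1) + card (?fiber 2)" by (rule card_Un_le)
  also have "\<dots> \<le> 1 + 1" using card_fiber_le_1[OF gaps_inj_mod(1)] by (intro add_mono) auto
  finally show ?thesis by (simp add: interval_depth_def)
qed

end

lemma half_sum_from_schedule:
  assumes "\<forall>i\<in>{1..t}. a i > 0" "sum a {1..t} = 2 * b"
    and "feasible2 (inst_jobs t) inst_prec (inst_p a b) s"
    and "makespan (inst_jobs t) (inst_p a b) s \<le> (2 * t + 3) * b"
  shows "\<exists>G\<subseteq>{1..t}. sum a G = b"
proof (cases "b = 0")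
  case True
  then show ?thesis by (intro exI[of _ "{}"]) simp
next
  case False
  interpret short_schedule a t b s by standard fact+
  show ?thesis
    using depth_two_interval_family_halves[of "{1..t}" offset "\<lambda>i. offset i + a i" b]
      offset_window interval_depth_offsets assms(1,2) False by simp
qed

lemma exists_equal_split_iff_half:
  fixes a :: "'a \<Rightarrow> nat"
  assumes "finite I" "sum a I = 2 * b"
  shows "(\<exists>S\<subseteq>I. sum a S = sum a (I - S)) \<longleftrightarrow> (\<exists>S\<subseteq>I. sum a S = b)"
proof -
  have "sum a S = sum a (I - S) \<longleftrightarrow> sum a S = b" if "S \<subseteq> I" for S
  proof -
    have "sum a I = sum a (I - S) + sum a S"
      using that \<open>finite I\<close> by (simp add: sum.subset_diff)
    then show ?thesis using assms(2) by linarith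
  qed
  then show ?thesis by blast
qed

theorem mainTheorem2:
  fixes a :: "nat \<Rightarrow> nat" and t b :: nat
  assumes pos: "\<forall>i\<in>{1..t}. a i > 0"
    and sum: "(\<Sum>i=1..t. a i) = 2 * b"
  shows "(\<exists>S\<subseteq>{1..t}. (\<Sum>i\<in>S. a i) = (\<Sum>i\<in>{1..t} - S. a i)) \<longleftrightarrow>
         (\<exists>s. feasible2 (inst_jobs t) inst_prec (inst_p a b) s \<and>
              makespan (inst_jobs t) (inst_p a b) s \<le> (2 * t + 3) * b)"
proof -
  have "(\<exists>S\<subseteq>{1..t}. sum a S = sum a ({1..t} - S)) \<longleftrightarrow> (\<exists>S\<subseteq>{1..t}. sum a S = b)"
    using sum by (intro exists_equal_split_iff_half) simp_all
  also have "\<dots> \<longleftrightarrow> (\<exists>s. feasible2 (inst_jobs t) inst_prec (inst_p a b) s \<and>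
                         makespan (inst_jobs t) (inst_p a b) s \<le> (2 * t + 3) * b)"
    using schedule_from_partition[OF _ _ sum] half_sum_from_schedule[OF pos sum] by blast
  finally show ?thesis .
qed

end
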